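(* For any finite graph $G$ with at least one edge, the family $\mathcal{C}(G)$ has Helly number $2$.
   Context: Let $X=\mathrm{MIS}(G)$ be the set of maximal independent sets of $G$; for $S\subseteq V(G)$ let $K_S=\{I\in X: S\subseteq I\}$; $\mathcal{C}(G)=\{K_S: S\subseteq V(G)\}$. The Helly number of a set system $\mathcal{F}$ is the minimum integer $h$ such that for every finite subfamily $\mathcal{G}\subseteq\mathcal{F}$, if every $h$ members of $\mathcal{G}$ have a common point, then all members of $\mathcal{G}$ have a common point. *)

theory Defs
  imports Main
begin

definition simple_graph :: "'a set \<Rightarrow> ('a \<Rightarrow> 'a \<Rightarrow> bool) \<Rightarrow> bool" where
  "simple_graph V E \<longleftrightarrow>
     (\<forall>u v. E u v \<longrightarrow> u \<in> V \<and> v \<in> V) \<and>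
     (\<forall>u v. E u v \<longrightarrow> E v u) \<and> (\<forall>u. \<not> E u u)"

definition independent :: "'a set \<Rightarrow> ('a \<Rightarrow> 'a \<Rightarrow> bool) \<Rightarrow> 'a set \<Rightarrow> bool" where
  "independent V E I \<longleftrightarrow> I \<subseteq> V \<and> (\<forall>u\<in>I. \<forall>v\<in>I. \<not> E u v)"

definition MIS :: "'a set \<Rightarrow> ('a \<Rightarrow> 'a \<Rightarrow> bool) \<Rightarrow> 'a set set" where
  "MIS V E = {I. independent V E I \<and> (\<forall>J. independent V E J \<and> I \<subseteq> J \<longrightarrow> J = I)}"

definition K_set :: "'a set \<Rightarrow> ('a \<Rightarrow> 'a \<Rightarrow> bool) \<Rightarrow> 'a set \<Rightarrow> 'a set set" where
  "K_set V E S = {I \<in> MIS V E. S \<subseteq> I}"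

definition C_fam :: "'a set \<Rightarrow> ('a \<Rightarrow> 'a \<Rightarrow> bool) \<Rightarrow> 'a set set set" where
  "C_fam V E = {K_set V E S | S. S \<subseteq> V}"

definition helly_prop :: "'b set \<Rightarrow> 'b set set \<Rightarrow> nat \<Rightarrow> bool" where
  "helly_prop X F h \<longleftrightarrow>
     (\<forall>G. G \<subseteq> F \<and> finite G \<longrightarrow>
        (\<forall>H. H \<subseteq> G \<and> card H \<le> h \<longrightarrow> (\<exists>x\<in>X. \<forall>A\<in>H. x \<in> A)) \<longrightarrow>
        (\<exists>x\<in>X. \<forall>A\<in>G. x \<in> A))"

definition helly_number :: "'b set \<Rightarrow> 'b set set \<Rightarrow> nat" where
  "helly_number X F = (LEAST h. helly_prop X F h)"

end

theory Submission
  imports Defs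
begin

text \<open>Members of \<open>\<C>(G)\<close> intersect as \<open>K\<^sub>S \<inter> K\<^sub>T = K\<^bsub>S \<union> T\<^esub>\<close>, and \<open>K\<^sub>S\<close> is nonempty
exactly when \<open>S\<close> is independent, since an independent set of a finite graph extends to
a maximal one. Independence of a union is decided pairwise, so any finite subfamily of
\<open>\<C>(G)\<close> whose members meet pairwise has a common point: the Helly number is at most 2.
An edge \<open>uv\<close> makes \<open>K\<^bsub>{u}\<^esub>\<close> and \<open>K\<^bsub>{v}\<^esub>\<close> two nonempty disjoint members, so it is not 1.\<close>

lemma MIS_independent: "I \<in> MIS V E \<Longrightarrow> independent V E I"
  unfolding MIS_def by blast

lemma independent_subset: "independent V E J \<Longrightarrow> I \<subseteq> J \<Longrightarrow> independent V E I"
  unfolding independent_def by blast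

lemma independent_Union_iff_pairwise:
  "independent V E (\<Union>\<S>) \<longleftrightarrow> (\<forall>S\<in>\<S>. \<forall>T\<in>\<S>. independent V E (S \<union> T))"
  unfolding independent_def by blast

lemma independent_extends_to_MIS:
  assumes "finite V" "independent V E S"
  shows "\<exists>I\<in>MIS V E. S \<subseteq> I"
proof -
  let ?A = "{J. independent V E J \<and> S \<subseteq> J}"
  have "finite ?A"
    by (rule finite_subset[of _ "Pow V"]) (auto simp: independent_def assms(1))
  moreover have "S \<in> ?A" using assms(2) by blast
  ultimately obtain I where "I \<in> ?A" "\<forall>J\<in>?A. I \<le> J \<longrightarrow> I = J"
    using finite_has_maximal[of ?A] by blast
  then have "I \<in> MIS V E"
    unfolding MIS_def by blast
  with \<open>I \<in> ?A\<close> show ?thesis by blast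
qed

lemma mem_K_set: "I \<in> K_set V E S \<longleftrightarrow> I \<in> MIS V E \<and> S \<subseteq> I"
  unfolding K_set_def by blast

lemma K_set_Union: "K_set V E (\<Union>\<S>) = MIS V E \<inter> (\<Inter>S\<in>\<S>. K_set V E S)"
  unfolding K_set_def by blast

lemma K_set_Un: "K_set V E (S \<union> T) = K_set V E S \<inter> K_set V E T"
  unfolding K_set_def by blast

lemma K_set_nonempty_iff_independent:
  assumes "finite V" "S \<subseteq> V"
  shows "K_set V E S \<noteq> {} \<longleftrightarrow> independent V E S"
  using independent_extends_to_MIS[OF assms(1)] independent_subset MIS_independent
  by (fastforce simp: mem_K_set)

lemma C_fam_eq_image: "C_fam V E = K_set V E ` Pow V"
  unfolding C_fam_def by blast

lemma K_set_disjoint_if_edge: "E u v \<Longrightarrow> K_set V E {u} \<inter> K_set V E {v} = {}"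
  by (auto simp: mem_K_set independent_def dest!: MIS_independent)

lemma helly_prop_C_fam_2:
  assumes "finite V"
  shows "helly_prop (MIS V E) (C_fam V E) 2"
  unfolding helly_prop_def
proof (intro allI impI, elim conjE)
  fix G assume "G \<subseteq> C_fam V E"
  then obtain \<S> where \<S>: "\<S> \<subseteq> Pow V" "G = K_set V E ` \<S>"
    unfolding C_fam_eq_image subset_image_iff by blast
  assume pairs: "\<forall>H. H \<subseteq> G \<and> card H \<le> 2 \<longrightarrow> (\<exists>x\<in>MIS V E. \<forall>A\<in>H. x \<in> A)"
  have "independent V E (S \<union> T)" if "S \<in> \<S>" "T \<in> \<S>" for S T
  proof -
    have "{K_set V E S, K_set V E T} \<subseteq> G" using that \<S>(2) by blast
    moreover have "card {K_set V E S, K_set V E T} \<le> 2" by (simp add: card_insert_if)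
    ultimately obtain I where "I \<in> K_set V E S" "I \<in> K_set V E T"
      using pairs[rule_format, of "{K_set V E S, K_set V E T}"] by auto
    then have "K_set V E (S \<union> T) \<noteq> {}"
      unfolding K_set_Un by blast
    moreover have "S \<union> T \<subseteq> V" using that \<S>(1) by blast
    ultimately show ?thesis
      using K_set_nonempty_iff_independent[OF assms] by blast
  qed
  then have "independent V E (\<Union>\<S>)"
    unfolding independent_Union_iff_pairwise by blast
  moreover have "\<Union>\<S> \<subseteq> V" using \<S>(1) by blast
  ultimately obtain I where "I \<in> K_set V E (\<Union>\<S>)"
    using K_set_nonempty_iff_independent[OF assms] by blast
  then show "\<exists>x\<in>MIS V E. \<forall>A\<in>G. x \<in> A"
    unfolding K_set_Union \<S>(2) by blast
qed

lemma helly_prop_le_1_pairwise_meet: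
  assumes "helly_prop X F h" "h \<le> 1" "A \<in> F" "B \<in> F"
    and "\<exists>x\<in>X. x \<in> A" "\<exists>x\<in>X. x \<in> B"
  shows "\<exists>x\<in>X. x \<in> A \<and> x \<in> B"
proof -
  have "\<exists>x\<in>X. \<forall>C\<in>H. x \<in> C" if "H \<subseteq> {A, B}" "card H \<le> h" for H
  proof -
    have "card H \<le> 1" using that(2) assms(2) by linarith
    moreover have "finite H" using that(1) finite_subset by blast
    ultimately have "H = {} \<or> (\<exists>C. H = {C})"
      by (metis card_0_eq card_1_singletonE le_eq_less_or_eq less_one)
    then show ?thesis using that(1) assms(5,6) by auto
  qed
  moreover have "{A, B} \<subseteq> F" "finite {A, B}" using assms(3,4) by simp_all
  ultimately show ?thesis
    using assms(1)[unfolded helly_prop_def, rule_format, of "{A, B}"] by blast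
qed

lemma not_helly_prop_C_fam_le_1:
  assumes "finite V" "simple_graph V E" "E u v" "h \<le> 1"
  shows "\<not> helly_prop (MIS V E) (C_fam V E) h"
proof
  assume helly: "helly_prop (MIS V E) (C_fam V E) h"
  have "u \<in> V" "v \<in> V" "\<not> E u u" "\<not> E v v"
    using assms(2,3) unfolding simple_graph_def by blast+
  then have "K_set V E {u} \<in> C_fam V E" "K_set V E {v} \<in> C_fam V E"
    and "K_set V E {u} \<noteq> {}" "K_set V E {v} \<noteq> {}"
    using K_set_nonempty_iff_independent[OF assms(1)]
    by (auto simp: C_fam_def independent_def)
  then have "\<exists>I\<in>MIS V E. I \<in> K_set V E {u} \<and> I \<in> K_set V E {v}"
    by (intro helly_prop_le_1_pairwise_meet[OF helly assms(4)]) (auto simp: mem_K_set)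
  then show False using K_set_disjoint_if_edge[of E u v V] assms(3) by blast
qed

theorem proposition2p10:
  fixes V :: "'a set" and E :: "'a \<Rightarrow> 'a \<Rightarrow> bool"
  assumes "finite V" and "simple_graph V E"
    and "\<exists>u v. E u v"
  shows "helly_number (MIS V E) (C_fam V E) = 2"
  unfolding helly_number_def
proof (rule Least_equality)
  show "helly_prop (MIS V E) (C_fam V E) 2"
    using helly_prop_C_fam_2[OF assms(1)] .
next
  fix h assume "helly_prop (MIS V E) (C_fam V E) h"
  moreover obtain u v where "E u v" using assms(3) by blast
  ultimately show "2 \<le> h"
    using not_helly_prop_C_fam_le_1[OF assms(1,2), of u v h] by linarith
qed

end
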